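(* Let $n\ge2$ be an integer and $\lambda\in(2n-1,2n)$. Let $\phi:[0,1]\to[0,1]$ be non-increasing with $\phi(0)=1$, continuous on $[0,1]$, differentiable on $(0,1)$, non-vanishing on $(0,1)$, and such that $\phi'/\phi$ is non-increasing on $(0,1)$. Then the function $p_0:[0,n-1]\to\mathbb{R}$, \[ p_0(l)=\frac{\phi\left(\frac{2l+1}{\lambda}\right)}{\phi\left(\frac{2l}{\lambda}\right)}, \] is non-increasing.
   Context: "Decreasing" in the paper is used in the wide sense (non-increasing). *)

theory Defs
  imports "HOL-Analysis.Analysis"
begin

end

theory Submission
  imports Defs
begin

text \<open>Since \<phi>'/\<phi> is non-increasing, ln \<phi> is concave, so its increment
  ln \<phi>(t + h) - ln \<phi>(t) over a step of fixed length h is non-increasing in t. Now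
  p0(l) = \<phi>(t + h) / \<phi>(t) with t = 2l/\<lambda> and h = 1/\<lambda>, and \<lambda> > 2n - 1 keeps
  t + h = (2l + 1)/\<lambda> < 1 for l \<le> n - 1, where \<phi> is still positive.\<close>

lemma shift_ratio_antimono_if_log_deriv_antimono:
  fixes f :: "real \<Rightarrow> real"
  assumes cont: "continuous_on {a..b} f"
    and diff: "f differentiable_on {a<..<b}"
    and pos: "\<And>t. a \<le> t \<Longrightarrow> t \<le> b \<Longrightarrow> 0 < f t"
    and log_deriv_antimono:
      "\<And>s t. a < s \<Longrightarrow> s \<le> t \<Longrightarrow> t < b \<Longrightarrow> deriv f t / f t \<le> deriv f s / f s"
    and "a \<le> x" "x \<le> y" "0 < h" "y + h \<le> b"
  shows "f (y + h) / f y \<le> f (x + h) / f x"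
proof -
  define g where "g t = ln (f (t + h)) - ln (f t)" for t
  have f_deriv: "(f has_real_derivative deriv f t) (at t)" if "a < t" "t < b" for t
    using diff that
    by (auto simp: differentiable_on_eq_differentiable_at DERIV_deriv_iff_real_differentiable)
  have "continuous_on {x..y} (\<lambda>t. f (t + h))"
    by (rule continuous_on_compose2[OF cont])
      (use \<open>a \<le> x\<close> \<open>0 < h\<close> \<open>y + h \<le> b\<close> in \<open>auto intro!: continuous_intros\<close>)
  moreover have "continuous_on {x..y} f"
    using cont by (rule continuous_on_subset) (use \<open>a \<le> x\<close> \<open>0 < h\<close> \<open>y + h \<le> b\<close> in auto)
  moreover have f_nonzero: "f t \<noteq> 0" if "x \<le> t" "t \<le> y + h" for t
    using pos[of t] that \<open>a \<le> x\<close> \<open>y + h \<le> b\<close> by simp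
  ultimately have "continuous_on {x..y} g"
    unfolding g_def using \<open>0 < h\<close> by (intro continuous_intros) (auto simp: f_nonzero)
  moreover have "\<exists>D. (g has_real_derivative D) (at t) \<and> D \<le> 0" if "x < t" "t < y" for t
  proof (intro exI conjI)
    have t: "a < t" "t + h < b" "0 < f t" "0 < f (t + h)"
      using that \<open>a \<le> x\<close> \<open>0 < h\<close> \<open>y + h \<le> b\<close> by (auto intro!: pos)
    have "((\<lambda>t. f (t + h)) has_real_derivative deriv f (t + h)) (at t)"
      using f_deriv[of "t + h"] t \<open>0 < h\<close> by (simp add: DERIV_shift)
    then show "(g has_real_derivative deriv f (t + h) / f (t + h) - deriv f t / f t) (at t)"
      unfolding g_def using t \<open>0 < h\<close>
      by (auto intro!: derivative_eq_intros f_deriv simp: field_simps)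
    show "deriv f (t + h) / f (t + h) - deriv f t / f t \<le> 0"
      using log_deriv_antimono[of t "t + h"] t \<open>0 < h\<close> by simp
  qed
  ultimately have "g y \<le> g x"
    using DERIV_nonpos_imp_decreasing_open[OF \<open>x \<le> y\<close>] by blast
  moreover have "0 < f x" "0 < f y" "0 < f (x + h)" "0 < f (y + h)"
    using pos \<open>a \<le> x\<close> \<open>x \<le> y\<close> \<open>0 < h\<close> \<open>y + h \<le> b\<close> by auto
  ultimately have "ln (f (y + h) / f y) \<le> ln (f (x + h) / f x)"
    by (simp add: g_def ln_div)
  then show ?thesis
    using \<open>0 < f x\<close> \<open>0 < f y\<close> \<open>0 < f (x + h)\<close> \<open>0 < f (y + h)\<close> by simp
qed

theorem mainTheorem13:
  fixes n :: nat and lam :: real and \<phi> :: "real \<Rightarrow> real"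
  assumes "n \<ge> 2"
    and "2 * real n - 1 < lam" and "lam < 2 * real n"
    and "\<phi> ` {0..1} \<subseteq> {0..1}"
    and "\<And>x y. 0 \<le> x \<Longrightarrow> x \<le> y \<Longrightarrow> y \<le> 1 \<Longrightarrow> \<phi> y \<le> \<phi> x"
    and "\<phi> 0 = 1"
    and "continuous_on {0..1} \<phi>"
    and "\<phi> differentiable_on {0<..<1}"
    and "\<And>x. 0 < x \<Longrightarrow> x < 1 \<Longrightarrow> \<phi> x \<noteq> 0"
    and "\<And>x y. 0 < x \<Longrightarrow> x \<le> y \<Longrightarrow> y < 1 \<Longrightarrow>
           deriv \<phi> y / \<phi> y \<le> deriv \<phi> x / \<phi> x"
  shows "\<forall>l1 l2. 0 \<le> l1 \<and> l1 \<le> l2 \<and> l2 \<le> real n - 1 \<longrightarrow>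
           \<phi> ((2 * l2 + 1) / lam) / \<phi> ((2 * l2) / lam)
             \<le> \<phi> ((2 * l1 + 1) / lam) / \<phi> ((2 * l1) / lam)"
proof (intro allI impI)
  fix l1 l2 :: real
  assume l: "0 \<le> l1 \<and> l1 \<le> l2 \<and> l2 \<le> real n - 1"
  define b where "b = (2 * l2 + 1) / lam"
  have "0 < lam" using assms(1,2) by simp
  have "b < 1"
    using l assms(2) \<open>0 < lam\<close> unfolding b_def by simp
  have pos: "0 < \<phi> t" if "0 \<le> t" "t \<le> b" for t
    using assms(4,6) assms(9)[of t] that \<open>b < 1\<close> by (cases "t = 0") force+
  have "\<phi> ((2 * l2) / lam + 1 / lam) / \<phi> ((2 * l2) / lam)
          \<le> \<phi> ((2 * l1) / lam + 1 / lam) / \<phi> ((2 * l1) / lam)"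
  proof (rule shift_ratio_antimono_if_log_deriv_antimono[where a = 0 and b = b])
    show "continuous_on {0..b} \<phi>"
      using assms(7) by (rule continuous_on_subset) (use \<open>b < 1\<close> in auto)
    show "\<phi> differentiable_on {0<..<b}"
      using assms(8) by (rule differentiable_on_subset) (use \<open>b < 1\<close> in auto)
  qed (use l pos assms(10) \<open>b < 1\<close> \<open>0 < lam\<close> in
        \<open>auto simp: b_def divide_right_mono add_divide_distrib\<close>)
  then show "\<phi> ((2 * l2 + 1) / lam) / \<phi> ((2 * l2) / lam)
               \<le> \<phi> ((2 * l1 + 1) / lam) / \<phi> ((2 * l1) / lam)"
    by (simp add: add_divide_distrib)
qed

end
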